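(* There exist constants $\delta>0$, $c>0$, $C>0$ and $N_0$ such that for every prime $N\ge N_0$: (i) there exists an integer $b\in[1,W)$ with $\gcd(b,W)=1$ such that $\frac1N\sum_{n=0}^{N-1}f_b(n)\ge\delta$; (ii) for every integer $b\in[1,W)$ with $\gcd(b,W)=1$ and every $n\in\{0,\dots,N-1\}$, one has $0\le f_b(n)\le c\,\nu_b(n)$ and $f_b(n)\le C\log N$.
   Context: Fix a $C^\infty$ function $\chi:\mathbb{R}\to[0,\infty)$ supported in $[-1,1]$ with $\chi(0)>0$ and $\int_0^\infty\chi'(x)^2\,dx=1$. Fix $\alpha\in(0,1/2)$. For a prime $N$ (large), let $w=w(N)=\lfloor\log\log N\rfloor$, $W=\prod_{p\le w,\ p\text{ prime}}p$, $R=N^\alpha$. $\mu$ is the Möbius function ($\mu(1)=1$, $\mu(d)=(-1)^\ell$ if $d$ is a product of $\ell$ distinct primes, $0$ otherwise) and $\phi$ is Euler's totient function. Set $\lambda(n)=\sum_{d\mid n,\ d\ge1}\mu(d)\chi\bigl(\frac{\log d}{\log R}\bigr)$ for integers $n\ge1$. For an integer $b$, define on $\{0,\dots,N-1\}$: $f_b(n)=\frac{\phi(W)}{W}\log(Wn+b)$ if $Wn+b\ge R$ and $Wn+b$ is prime, and $f_b(n)=0$ otherwise; and $\nu_b(n)=\frac{\phi(W)}{W}\log R\cdot\lambda(Wn+b)^2$. *)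

theory Defs
  imports "HOL-Analysis.Analysis" "HOL-Number_Theory.Number_Theory" "HOL-Computational_Algebra.Squarefree"
begin

definition smooth_real :: "(real \<Rightarrow> real) \<Rightarrow> bool" where
  "smooth_real f \<longleftrightarrow> (\<exists>D :: nat \<Rightarrow> real \<Rightarrow> real. D 0 = f \<and>
      (\<forall>k x. (D k has_real_derivative D (Suc k) x) (at x)))"

definition mobius :: "nat \<Rightarrow> int" where
  "mobius d = (if d = 0 then 0 else if squarefree d then (-1) ^ card (prime_factors d) else 0)"

definition wN :: "nat \<Rightarrow> nat" where
  "wN N = nat \<lfloor>ln (ln (real N))\<rfloor>"

definition WN :: "nat \<Rightarrow> nat" where
  "WN N = (\<Prod>p\<in>{p. prime p \<and> p \<le> wN N}. p)"

definition RN :: "real \<Rightarrow> nat \<Rightarrow> real" where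
  "RN \<alpha> N = real N powr \<alpha>"

definition lam :: "(real \<Rightarrow> real) \<Rightarrow> real \<Rightarrow> nat \<Rightarrow> real" where
  "lam chi R n = (\<Sum>d\<in>{d. d dvd n}. real_of_int (mobius d) * chi (ln (real d) / ln R))"

definition fb :: "real \<Rightarrow> nat \<Rightarrow> nat \<Rightarrow> nat \<Rightarrow> real" where
  "fb \<alpha> N b n = (let W = WN N; m = W * n + b in
     if real m \<ge> RN \<alpha> N \<and> prime m then real (totient W) / real W * ln (real m) else 0)"

definition nub :: "(real \<Rightarrow> real) \<Rightarrow> real \<Rightarrow> nat \<Rightarrow> nat \<Rightarrow> nat \<Rightarrow> real" where
  "nub chi \<alpha> N b n = (let W = WN N; R = RN \<alpha> N in
     real (totient W) / real W * ln R * (lam chi R (W * n + b))\<^sup>2)"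

end

theory Submission
  imports Defs "HOL-Real_Asymp.Real_Asymp"
begin

(* If m = W n + b >= R is prime, its only divisors are 1 and m, and log m / log R >= 1 lies
   where the continuous cut-off chi vanishes, so lambda(m) = chi(0); as m <= N^2, f_b(n) is at most
   2 log N = (2 / alpha) log R, which gives both pointwise bounds.

   For the density bound, (b, n) |-> W n + b maps the reduced residues b < W times [0, N)
   bijectively onto the integers below W N coprime to W, so the sum of f_b over all b is
   phi(W)/W times the sum of log p over the primes p in [R, W N) with p > w.  Chebyshev's bound
   pi(x) log x >= x/2 for large x, from 4^n/(2n) <= C(2n, n) <= (2n)^pi(2n) and Legendre's
   formula, shows that there are >> W N / log N such primes, because R and w are at most sqrt N.
   Hence the average of sum_n f_b(n) over the phi(W) residues b is at least alpha N / 16. *)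

definition prime_count :: "nat \<Rightarrow> nat" where
  "prime_count x = card {p. prime p \<and> p \<le> x}"

lemma multiplicity_less_self:
  fixes p m :: nat
  assumes "prime p" "m > 0"
  shows "multiplicity p m < m"
proof -
  have "multiplicity p m < 2 ^ multiplicity p m" by simp
  also have "\<dots> \<le> p ^ multiplicity p m"
    using prime_ge_2_nat[OF assms(1)] by (simp add: power_mono)
  also have "\<dots> \<le> m" using assms(2) by (intro dvd_imp_le multiplicity_dvd)
  finally show ?thesis .
qed

lemma multiplicity_fact:
  fixes p :: nat
  assumes p: "prime p" and "n \<le> K"
  shows "multiplicity p (fact n :: nat) = (\<Sum>i=1..K. n div p ^ i)"
  using \<open>n \<le> K\<close>
proof (induction n)
  case 0
  then show ?case by simp
next
  case (Suc n)
  have dvd_iff: "p ^ i dvd Suc n \<longleftrightarrow> i \<le> multiplicity p (Suc n)" for i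
    using p by (intro power_dvd_iff_le_multiplicity) auto
  have "multiplicity p (Suc n) \<le> K"
    using multiplicity_less_self[OF p, of "Suc n"] Suc.prems by simp
  then have "{i\<in>{1..K}. p ^ i dvd Suc n} = {1..multiplicity p (Suc n)}"
    unfolding dvd_iff by auto
  then have "multiplicity p (Suc n) = (\<Sum>i=1..K. if p ^ i dvd Suc n then 1 else 0)"
    by (simp add: sum.If_cases Int_def conj_commute)
  moreover have "multiplicity p (fact (Suc n) :: nat) = multiplicity p (Suc n) + multiplicity p (fact n :: nat)"
    using p by (simp only: fact_Suc of_nat_id, subst prime_elem_multiplicity_mult_distrib) auto
  ultimately have "multiplicity p (fact (Suc n) :: nat)
      = (\<Sum>i=1..K. n div p ^ i + (if p ^ i dvd Suc n then 1 else 0))"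
    using Suc by (simp add: sum.distrib)
  also have "\<dots> = (\<Sum>i=1..K. Suc n div p ^ i)"
    by (intro sum.cong refl) (auto simp: div_Suc dvd_eq_mod_eq_0)
  finally show ?case .
qed

lemma double_div_le:
  fixes n q :: nat
  shows "(2 * n) div q \<le> 2 * (n div q) + (if q \<le> 2 * n then 1 else 0)"
proof (cases "0 < q \<and> q \<le> 2 * n")
  case True
  then have q: "0 < q" by simp
  have "n = n div q * q + n mod q" by simp
  then have "2 * n = 2 * (n mod q) + 2 * (n div q) * q"
    by linarith
  then have "2 * n div q = 2 * (n mod q) div q + 2 * (n div q)"
    using q by simp
  moreover have "2 * (n mod q) div q < 2"
    using q by (intro less_mult_imp_div_less) simp
  ultimately show ?thesis
    using True by simp
next
  case False
  then show ?thesis by (auto simp: div_less)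
qed

lemma prime_power_multiplicity_central_binomial_le:
  fixes p n :: nat
  assumes p: "prime p" and n: "n > 0"
  shows "p ^ multiplicity p ((2 * n) choose n) \<le> 2 * n"
proof (rule ccontr)
  define j where "j = multiplicity p ((2 * n) choose n)"
  assume "\<not> p ^ multiplicity p ((2 * n) choose n) \<le> 2 * n"
  then have big: "2 * n < p ^ j" unfolding j_def by simp
  have "fact (2 * n) = fact n * fact n * ((2 * n) choose n)"
    using binomial_fact_lemma[of n "2 * n"] by simp
  then have "multiplicity p (fact (2 * n) :: nat) = 2 * multiplicity p (fact n :: nat) + j"
    unfolding j_def using p
    by (simp add: prime_elem_multiplicity_mult_distrib del: binomial_eq_0_iff)
  \<comment> \<open>Legendre: \<open>j\<close> is the sum of the terms \<open>\<lfloor>2n/p^i\<rfloor> - 2\<lfloor>n/p^i\<rfloor>\<close>, each 0 or 1 and 0 once \<open>p^i > 2n\<close>.\<close>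
  then have legendre: "(\<Sum>i=1..2*n. (2 * n) div p ^ i) = 2 * (\<Sum>i=1..2*n. n div p ^ i) + j"
    using multiplicity_fact[OF p, of "2 * n" "2 * n"] multiplicity_fact[OF p, of n "2 * n"]
    by (simp add: sum_distrib_left)
  have "(\<Sum>i=1..2*n. (2 * n) div p ^ i)
        \<le> (\<Sum>i=1..2*n. 2 * (n div p ^ i) + (if p ^ i \<le> 2 * n then 1 else 0))"
    by (intro sum_mono double_div_le)
  also have "\<dots> = 2 * (\<Sum>i=1..2*n. n div p ^ i) + card {i\<in>{1..2*n}. p ^ i \<le> 2 * n}"
    by (simp add: sum.distrib sum_distrib_left sum.If_cases Int_def conj_commute)
  finally have "j \<le> card {i\<in>{1..2*n}. p ^ i \<le> 2 * n}"
    using legendre by simp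
  also have "\<dots> \<le> card {1..<j}"
  proof (intro card_mono subsetI)
    fix i assume i: "i \<in> {i\<in>{1..2*n}. p ^ i \<le> 2 * n}"
    then have "p ^ i < p ^ j" using big by simp
    then have "i < j" by (rule power_less_imp_less_exp[OF prime_gt_1_nat[OF p]])
    then show "i \<in> {1..<j}" using i by simp
  qed simp
  finally have "j = 0" by simp
  then show False using big n by simp
qed

lemma central_binomial_le_power_prime_count:
  fixes n :: nat
  assumes n: "n > 0"
  shows "(2 * n) choose n \<le> (2 * n) ^ prime_count (2 * n)"
proof -
  define C where "C = (2 * n) choose n"
  have C0: "C \<noteq> 0" unfolding C_def by simp
  have factors: "prime_factors C \<subseteq> {p. prime p \<and> p \<le> 2 * n}"
  proof
    fix p assume p: "p \<in> prime_factors C"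
    then have "prime p" "multiplicity p C \<ge> 1"
      using C0 by (auto simp: prime_factors_multiplicity)
    then have "p ^ 1 \<le> p ^ multiplicity p C"
      using prime_ge_1_nat[of p] by (intro power_increasing) auto
    also have "\<dots> \<le> 2 * n"
      unfolding C_def using \<open>prime p\<close> n by (rule prime_power_multiplicity_central_binomial_le)
    finally show "p \<in> {p. prime p \<and> p \<le> 2 * n}" using \<open>prime p\<close> by simp
  qed
  have "C = (\<Prod>p\<in>prime_factors C. p ^ multiplicity p C)"
    using prod_prime_factors[OF C0] by simp
  also have "\<dots> \<le> (\<Prod>p\<in>prime_factors C. 2 * n)"
    by (intro prod_mono) (auto simp: C_def intro!: prime_power_multiplicity_central_binomial_le n)
  also have "\<dots> = (2 * n) ^ card (prime_factors C)" by simp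
  also have "\<dots> \<le> (2 * n) ^ prime_count (2 * n)"
    unfolding prime_count_def using factors n by (intro power_increasing card_mono) auto
  finally show ?thesis unfolding C_def .
qed

lemma prime_count_mono: "x \<le> y \<Longrightarrow> prime_count x \<le> prime_count y"
  unfolding prime_count_def by (intro card_mono) auto

lemma prime_count_ln_lower_bound:
  fixes X :: nat
  assumes X: "X \<ge> 2"
  shows "(real X - 1) * ln 2 - ln (real X) \<le> real (prime_count X) * ln (real X)"
proof -
  define n where "n = X div 2"
  have n: "n > 0" "2 * n \<le> X" "real X - 1 \<le> 2 * real n"
    using X unfolding n_def by linarith+
  have "4 ^ n / (2 * real n) \<le> real ((2 * n) choose n)"
    using n(1) by (rule central_binomial_lower_bound)
  also have "\<dots> \<le> real ((2 * n) ^ prime_count (2 * n))"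
    using central_binomial_le_power_prime_count[OF n(1)] by (simp only: of_nat_le_iff)
  also have "\<dots> = (2 * real n) ^ prime_count (2 * n)"
    by simp
  finally have "ln (4 ^ n / (2 * real n)) \<le> ln ((2 * real n) ^ prime_count (2 * n))"
    using n by (subst ln_le_cancel_iff) auto
  moreover have "ln (4 ^ n / (2 * real n)) = 2 * real n * ln 2 - ln (2 * real n)"
    using n ln_realpow[of 2 2] by (simp add: ln_div ln_realpow)
  moreover have "ln ((2 * real n) ^ prime_count (2 * n)) = real (prime_count (2 * n)) * ln (2 * real n)"
    by (rule ln_realpow)
  ultimately have "2 * real n * ln 2 - ln (2 * real n) \<le> real (prime_count (2 * n)) * ln (2 * real n)"
    by linarith
  moreover have "ln (2 * real n) \<le> ln (real X)" "0 \<le> ln (2 * real n)"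
    using n by auto
  moreover have "real (prime_count (2 * n)) \<le> real (prime_count X)"
    using prime_count_mono[OF n(2)] by simp
  moreover have "(real X - 1) * ln 2 \<le> 2 * real n * ln 2"
    using n by (intro mult_right_mono) auto
  ultimately show ?thesis
    by (smt (verit) mult_mono of_nat_0_le_iff)
qed

lemma eventually_prime_count_ln_ge:
  "eventually (\<lambda>X. real X / 2 \<le> real (prime_count X) * ln (real X)) sequentially"
proof -
  have "eventually (\<lambda>x::real. x / 2 \<le> (x - 1) * (2 / 3) - ln x \<and> 1 \<le> x) at_top"
    by (intro eventually_conj; real_asymp)
  then have "eventually (\<lambda>x::real. x / 2 \<le> (x - 1) * ln 2 - ln x) at_top"
    by eventually_elim (use ln2_ge_two_thirds in \<open>smt (verit) mult_left_mono\<close>)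
  then have "eventually (\<lambda>X. real X / 2 \<le> (real X - 1) * ln 2 - ln (real X)) sequentially"
    by (rule eventually_compose_filterlim[OF _ filterlim_real_sequentially])
  then show ?thesis
    using eventually_ge_at_top[of 2]
    by eventually_elim (use prime_count_ln_lower_bound in force)
qed

lemma smooth_real_imp_isCont: "smooth_real f \<Longrightarrow> isCont f x"
  unfolding smooth_real_def by (metis DERIV_isCont)

lemma vanishes_from_one:
  fixes chi :: "real \<Rightarrow> real"
  assumes cont: "isCont chi 1" and supp: "\<And>x. \<bar>x\<bar> > 1 \<Longrightarrow> chi x = 0" and "1 \<le> x"
  shows "chi x = 0"
proof (cases "x = 1")
  case True
  have "(chi \<longlongrightarrow> chi 1) (at_right 1)"
    using cont by (simp add: isCont_def filterlim_at_split)
  moreover have "(chi \<longlongrightarrow> 0) (at_right 1)"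
    by (rule tendsto_eventually) (use eventually_at_right_less[of 1] in \<open>eventually_elim, simp add: supp\<close>)
  ultimately show ?thesis
    using True tendsto_unique[OF trivial_limit_at_right_real] by blast
qed (use assms in auto)

lemma mobius_prime: "prime p \<Longrightarrow> mobius p = -1"
  by (simp add: mobius_def squarefree_prime prime_prime_factors)

lemma lam_prime:
  fixes chi :: "real \<Rightarrow> real"
  assumes m: "prime m" and R: "1 < R" "R \<le> real m"
    and vanish: "\<And>x. 1 \<le> x \<Longrightarrow> chi x = 0"
  shows "lam chi R m = chi 0"
proof -
  have "{d. d dvd m} = {1, m}" "m \<noteq> 1" "mobius 1 = 1"
    using m by (auto simp: prime_nat_iff mobius_def)
  then have "lam chi R m = chi 0 - chi (ln (real m) / ln R)"
    unfolding lam_def using m by (simp add: mobius_prime)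
  moreover have "1 \<le> ln (real m) / ln R"
    using R by simp
  ultimately show ?thesis
    using vanish by simp
qed

lemma coprime_primorial:
  fixes p w :: nat
  assumes "prime p" "w < p"
  shows "coprime p (\<Prod>q\<in>{q. prime q \<and> q \<le> w}. q)"
  using assms by (intro prod_coprime_right) (auto simp: primes_coprime)

lemma primorial_ge_two:
  fixes w :: nat
  assumes "2 \<le> w"
  shows "2 \<le> (\<Prod>q\<in>{q. prime q \<and> q \<le> w}. q)"
proof -
  have fin: "finite {q::nat. prime q \<and> q \<le> w}" by simp
  have "(2::nat) dvd (\<Prod>q\<in>{q. prime q \<and> q \<le> w}. q)"
    using assms by (intro dvd_prodI[OF fin, of 2, simplified]) simp
  moreover have "0 < (\<Prod>q\<in>{q::nat. prime q \<and> q \<le> w}. q)"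
    by (intro prod_pos) (auto simp: prime_gt_0_nat)
  ultimately show ?thesis by (simp add: dvd_imp_le)
qed

lemma primorial_le_power:
  fixes w :: nat
  assumes "1 \<le> w"
  shows "(\<Prod>q\<in>{q. prime q \<and> q \<le> w}. q) \<le> w ^ w"
proof (rule prod_le_power)
  have "card {q. prime q \<and> q \<le> w} \<le> card {1..w}"
    by (intro card_mono) (auto dest: prime_ge_1_nat)
  then show "card {q. prime q \<and> q \<le> w} \<le> w" by simp
qed (use assms in auto)

lemma coprime_WN: "prime p \<Longrightarrow> wN N < p \<Longrightarrow> coprime p (WN N)"
  unfolding WN_def by (rule coprime_primorial)

lemma eventually_WN_bounds:
  "eventually (\<lambda>N. 2 \<le> WN N \<and> WN N \<le> N \<and> real (wN N) \<le> sqrt (real N)) sequentially"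
proof -
  have "eventually (\<lambda>x::real. 2 \<le> ln (ln x) \<and> ln (ln x) * ln (ln (ln x)) \<le> ln x
      \<and> ln (ln x) \<le> sqrt x) at_top"
    by (intro eventually_conj; real_asymp)
  from eventually_compose_filterlim[OF this filterlim_real_sequentially]
  show ?thesis
  proof eventually_elim
    case (elim N)
    define L where "L = ln (ln (real N))"
    define w where "w = wN N"
    have w: "2 \<le> w" "real w \<le> L"
      using elim unfolding w_def wN_def L_def by linarith+
    have N: "0 < real N"
      using elim by (cases "N = 0") auto
    have "ln (real w ^ w) = real w * ln (real w)" by (rule ln_realpow)
    also have "\<dots> \<le> L * ln L"
      using w by (intro mult_mono) auto
    also have "\<dots> \<le> ln (real N)"
      using elim unfolding L_def by simp
    finally have "real w ^ w \<le> real N"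
      using w N by (subst (asm) ln_le_cancel_iff) auto
    then have "w ^ w \<le> N"
      by (simp flip: of_nat_power)
    then have "WN N \<le> N"
      using primorial_le_power[of w] w unfolding WN_def w_def by linarith
    moreover have "2 \<le> WN N"
      using w unfolding WN_def w_def by (intro primorial_ge_two)
    ultimately show ?case
      using w elim unfolding w_def L_def by auto
  qed
qed

lemma totient_div_le_one: "real (totient W) / real W \<le> 1"
  using totient_le[of W] by (cases "W = 0") auto

lemma ln_of_nat_nonneg: "0 \<le> ln (real (m::nat))"
  by (cases "m = 0") auto

lemma fb_nonneg: "0 \<le> fb \<alpha> N b n"
proof -
  define m where "m = WN N * n + b"
  show ?thesis
    unfolding fb_def Let_def m_def[symmetric] using ln_of_nat_nonneg[of m] by simp
qed

lemma fb_le_ln: "fb \<alpha> N b n \<le> ln (real (WN N * n + b))"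
proof -
  define m where "m = WN N * n + b"
  have "real (totient (WN N)) / real (WN N) * ln (real m) \<le> ln (real m)"
    by (intro mult_left_le_one_le ln_of_nat_nonneg totient_div_le_one) simp
  then show ?thesis
    unfolding fb_def Let_def m_def[symmetric] using ln_of_nat_nonneg[of m] by simp
qed

lemma fb_le_nub:
  fixes chi :: "real \<Rightarrow> real"
  assumes vanish: "\<And>x. 1 \<le> x \<Longrightarrow> chi x = 0" and chi0: "chi 0 \<noteq> 0"
    and R: "1 < RN \<alpha> N" and K: "0 \<le> K" "ln (real (WN N * n + b)) \<le> K * ln (RN \<alpha> N)"
  shows "fb \<alpha> N b n \<le> K / (chi 0)\<^sup>2 * nub chi \<alpha> N b n"
proof (cases "RN \<alpha> N \<le> real (WN N * n + b) \<and> prime (WN N * n + b)")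
  case True
  define \<theta> where "\<theta> = real (totient (WN N)) / real (WN N)"
  have "0 \<le> \<theta>" unfolding \<theta>_def by simp
  have "nub chi \<alpha> N b n = \<theta> * ln (RN \<alpha> N) * (chi 0)\<^sup>2"
    unfolding nub_def Let_def \<theta>_def using True R vanish by (simp add: lam_prime)
  then have "K / (chi 0)\<^sup>2 * nub chi \<alpha> N b n = \<theta> * (K * ln (RN \<alpha> N))"
    using chi0 by (simp add: field_simps)
  moreover have "fb \<alpha> N b n = \<theta> * ln (real (WN N * n + b))"
    unfolding fb_def Let_def \<theta>_def using True by simp
  ultimately show ?thesis
    using K(2) \<open>0 \<le> \<theta>\<close> by (simp add: mult_left_mono)
next
  case False
  then have "fb \<alpha> N b n = 0"
    unfolding fb_def Let_def by auto
  moreover have "0 \<le> nub chi \<alpha> N b n"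
    unfolding nub_def Let_def using R by simp
  ultimately show ?thesis
    using K by simp
qed

lemma ln_le_twice_ln:
  fixes m N :: nat
  assumes "m \<le> N * N" "1 \<le> N"
  shows "ln (real m) \<le> 2 * ln (real N)"
proof (cases "m = 0")
  case False
  then have "ln (real m) \<le> ln (real N * real N)"
    using assms by (subst ln_le_cancel_iff) (auto simp flip: of_nat_mult)
  also have "\<dots> = 2 * ln (real N)"
    using assms by (simp add: ln_mult)
  finally show ?thesis .
qed (use assms in simp)

lemma mult_add_less_mult:
  fixes W N n b :: nat
  assumes "b < W" "n < N"
  shows "W * n + b < W * N"
proof -
  have "W * n + b < W * (n + 1)" using assms by simp
  also have "\<dots> \<le> W * N" using assms by (intro mult_left_mono) auto
  finally show ?thesis .
qed

lemma eventually_fb_bounds: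
  fixes chi :: "real \<Rightarrow> real"
  assumes vanish: "\<And>x. 1 \<le> x \<Longrightarrow> chi x = 0" and chi0: "chi 0 \<noteq> 0" and \<alpha>: "0 < \<alpha>"
  shows "eventually (\<lambda>N. \<forall>b<WN N. \<forall>n<N. 0 \<le> fb \<alpha> N b n
            \<and> fb \<alpha> N b n \<le> 2 / (\<alpha> * (chi 0)\<^sup>2) * nub chi \<alpha> N b n
            \<and> fb \<alpha> N b n \<le> 2 * ln (real N)) sequentially"
  using eventually_WN_bounds eventually_ge_at_top[of 2]
proof eventually_elim
  case (elim N)
  have lnR: "ln (RN \<alpha> N) = \<alpha> * ln (real N)" and R: "1 < RN \<alpha> N"
    using elim \<alpha> by (simp_all add: RN_def ln_powr)
  show ?case
  proof (intro allI impI conjI)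
    fix b n assume "b < WN N" "n < N"
    moreover have "WN N * N \<le> N * N"
      using elim by simp
    ultimately have "WN N * n + b \<le> N * N"
      using mult_add_less_mult[of b "WN N" n N] by linarith
    then have "ln (real (WN N * n + b)) \<le> 2 * ln (real N)"
      using elim by (intro ln_le_twice_ln) auto
    moreover have "2 * ln (real N) = 2 / \<alpha> * ln (RN \<alpha> N)"
      using lnR \<alpha> by simp
    ultimately have "fb \<alpha> N b n \<le> 2 / \<alpha> / (chi 0)\<^sup>2 * nub chi \<alpha> N b n"
      using \<alpha> by (intro fb_le_nub vanish chi0 R) auto
    then show "fb \<alpha> N b n \<le> 2 / (\<alpha> * (chi 0)\<^sup>2) * nub chi \<alpha> N b n"
      by (simp add: field_simps)
    show "fb \<alpha> N b n \<le> 2 * ln (real N)"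
      using fb_le_ln \<open>ln _ \<le> 2 * ln (real N)\<close> by (rule order.trans)
  qed (rule fb_nonneg)
qed

lemma bij_betw_totatives_times_lessThan:
  fixes W N :: nat
  assumes W: "1 < W"
  shows "bij_betw (\<lambda>(b, n). W * n + b) (totatives W \<times> {..<N}) {m. m < W * N \<and> coprime m W}"
proof (rule bij_betw_byWitness[where f' = "\<lambda>m. (m mod W, m div W)"])
  have residue: "(W * n + b) mod W = b" "(W * n + b) div W = n" if "b \<in> totatives W" for b n
    using totatives_less[OF that W] by simp_all
  then show "\<forall>z\<in>totatives W \<times> {..<N}. (\<lambda>m. (m mod W, m div W)) ((\<lambda>(b, n). W * n + b) z) = z"
    by auto
  show "\<forall>m\<in>{m. m < W * N \<and> coprime m W}. (\<lambda>(b, n). W * n + b) (m mod W, m div W) = m"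
    by simp
  show "(\<lambda>(b, n). W * n + b) ` (totatives W \<times> {..<N}) \<subseteq> {m. m < W * N \<and> coprime m W}"
  proof clarify
    fix b n assume b: "b \<in> totatives W" and n: "n < N"
    have "W * n + b < W * N"
      using totatives_less[OF b W] n by (rule mult_add_less_mult)
    moreover have "coprime (W * n + b) W"
      using coprime_mod_left_iff[of W "W * n + b"] residue(1)[OF b] b W by (simp add: in_totatives_iff)
    ultimately show "W * n + b < W * N \<and> coprime (W * n + b) W" by simp
  qed
  show "(\<lambda>m. (m mod W, m div W)) ` {m. m < W * N \<and> coprime m W} \<subseteq> totatives W \<times> {..<N}"
  proof
    fix z assume "z \<in> (\<lambda>m. (m mod W, m div W)) ` {m. m < W * N \<and> coprime m W}"
    then obtain m where m: "m < W * N" "coprime m W" and z: "z = (m mod W, m div W)"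
      by auto
    have "m mod W \<noteq> 0"
    proof
      assume "m mod W = 0"
      then have "coprime 0 W" using m(2) W by (metis coprime_mod_left_iff not_one_less_zero)
      then show False using W by simp
    qed
    then have "m mod W \<in> totatives W"
      using m(2) W by (simp add: in_totatives_iff less_imp_le)
    moreover have "m div W < N"
      using m(1) W by (simp add: div_less_iff_less_mult mult.commute)
    ultimately show "z \<in> totatives W \<times> {..<N}"
      using z by simp
  qed
qed

lemma sum_fb_totatives:
  assumes W: "1 < WN N"
  shows "(\<Sum>b\<in>totatives (WN N). \<Sum>n<N. fb \<alpha> N b n)
    = real (totient (WN N)) / real (WN N)
      * (\<Sum>p\<in>{p. prime p \<and> p < WN N * N \<and> RN \<alpha> N \<le> real p \<and> coprime p (WN N)}. ln (real p))"
proof -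
  define g where "g m = (if RN \<alpha> N \<le> real m \<and> prime m
    then real (totient (WN N)) / real (WN N) * ln (real m) else 0)" for m
  have "(\<Sum>b\<in>totatives (WN N). \<Sum>n<N. fb \<alpha> N b n)
      = (\<Sum>(b, n)\<in>totatives (WN N) \<times> {..<N}. g (WN N * n + b))"
    unfolding sum.cartesian_product g_def fb_def Let_def ..
  also have "\<dots> = (\<Sum>m\<in>{m. m < WN N * N \<and> coprime m (WN N)}. g m)"
    using sum.reindex_bij_betw[OF bij_betw_totatives_times_lessThan[OF W, of N], of g]
    by (simp add: case_prod_unfold)
  also have "\<dots> = real (totient (WN N)) / real (WN N)
      * (\<Sum>p\<in>{p. prime p \<and> p < WN N * N \<and> RN \<alpha> N \<le> real p \<and> coprime p (WN N)}. ln (real p))"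
    unfolding g_def by (simp add: sum.If_cases sum_distrib_left Int_def conj_ac)
  finally show ?thesis .
qed

lemma prime_count_le_card_large_coprime_primes:
  fixes W w X :: nat and R :: real
  assumes R: "0 \<le> R" and coprime: "\<And>p. prime p \<Longrightarrow> w < p \<Longrightarrow> coprime p W"
  shows "real (prime_count X)
    \<le> real (card {p. prime p \<and> p \<le> X \<and> R \<le> real p \<and> coprime p W}) + R + real w + 2"
proof -
  define P where "P = {p. prime p \<and> p \<le> X \<and> R \<le> real p \<and> coprime p W}"
  have "R \<le> real p" if "nat \<lceil>R\<rceil> \<le> p" for p
    using that by (simp add: nat_le_iff ceiling_le_iff)
  then have "{p. prime p \<and> p \<le> X} \<subseteq> P \<union> {..<nat \<lceil>R\<rceil>} \<union> {..w}"
    using coprime by (auto simp: P_def not_le not_less)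
  then have "prime_count X \<le> card (P \<union> {..<nat \<lceil>R\<rceil>} \<union> {..w})"
    unfolding prime_count_def by (intro card_mono) (auto simp: P_def)
  also have "\<dots> \<le> card P + nat \<lceil>R\<rceil> + Suc w"
    using card_Un_le[of "P \<union> {..<nat \<lceil>R\<rceil>}" "{..w}"] card_Un_le[of P "{..<nat \<lceil>R\<rceil>}"] by simp
  finally have "real (prime_count X) \<le> real (card P) + real (nat \<lceil>R\<rceil>) + real w + 1"
    by linarith
  moreover have "real (nat \<lceil>R\<rceil>) \<le> R + 1"
    using R by linarith
  ultimately show ?thesis
    unfolding P_def by linarith
qed

lemma card_large_coprime_primes_lower_bound:
  fixes W w N :: nat and R :: real
  assumes W: "2 \<le> W" "W \<le> N" and w: "real w \<le> sqrt (real N)" and R: "0 \<le> R" "R \<le> sqrt (real N)"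
    and coprime: "\<And>p. prime p \<Longrightarrow> w < p \<Longrightarrow> coprime p W"
    and chebyshev: "real (W * N - 1) / 2 \<le> real (prime_count (W * N - 1)) * ln (real (W * N - 1))"
    and small: "(2 * sqrt (real N) + 2) * ln (real N) \<le> real N / 16"
  shows "real W * real N / 16
    \<le> real (card {p. prime p \<and> p < W * N \<and> R \<le> real p \<and> coprime p W}) * ln (real N)"
proof -
  define X where "X = W * N - 1"
  define P where "P = {p. prime p \<and> p < W * N \<and> R \<le> real p \<and> coprime p W}"
  have N: "2 \<le> N" "0 \<le> ln (real N)"
    using W by auto
  have "0 < W * N"
    using W by simp
  then have "p \<le> X \<longleftrightarrow> p < W * N" for p
    unfolding X_def by linarith
  then have "{p. prime p \<and> p \<le> X \<and> R \<le> real p \<and> coprime p W} = P"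
    unfolding P_def by simp
  then have "real (prime_count X) \<le> real (card P) + (2 * sqrt (real N) + 2)"
    using prime_count_le_card_large_coprime_primes[of R w W X, OF R(1) coprime] w R by simp
  then have "real (prime_count X) * ln (real N) \<le> real (card P) * ln (real N) + real N / 16"
    using mult_right_mono[OF _ N(2)] small by (smt (verit) distrib_right)
  have "W * N \<le> N * N"
    using W by (intro mult_right_mono) auto
  then have "X \<le> N * N"
    unfolding X_def by linarith
  then have "ln (real X) \<le> 2 * ln (real N)"
    using N by (intro ln_le_twice_ln) auto
  then have "real X / 2 \<le> real (prime_count X) * (2 * ln (real N))"
    using chebyshev unfolding X_def[symmetric] by (smt (verit) mult_left_mono of_nat_0_le_iff)
  moreover have "real W * real N / 2 \<le> real X"
  proof -
    have "2 * 1 \<le> W * N"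
      using W N(1) by (intro mult_le_mono) auto
    then have "2 \<le> real W * real N" "real X = real W * real N - 1"
      unfolding X_def by (simp_all add: of_nat_diff flip: of_nat_mult)
    then show ?thesis by linarith
  qed
  moreover have "real N \<le> real W * real N"
    using W by simp
  ultimately show ?thesis
    using \<open>real (prime_count X) * ln (real N) \<le> _\<close> unfolding P_def by linarith
qed

lemma exists_ge_average:
  fixes g :: "'a \<Rightarrow> real"
  assumes "finite A" "A \<noteq> {}"
  shows "\<exists>a\<in>A. sum g A / real (card A) \<le> g a"
proof (rule ccontr)
  assume "\<not> ?thesis"
  then have "sum g A < (\<Sum>a\<in>A. sum g A / real (card A))"
    using assms by (intro sum_strict_mono) auto
  then show False
    using assms by simp
qed

lemma sum_fb_totatives_lower_bound:
  fixes N :: nat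
  assumes W: "1 < WN N" and \<alpha>: "0 < \<alpha>" and N: "1 < N"
    and primes: "real (WN N) * real N / 16 \<le> real (card {p. prime p \<and> p < WN N * N
        \<and> RN \<alpha> N \<le> real p \<and> coprime p (WN N)}) * ln (real N)"
  shows "real (totient (WN N)) * (\<alpha> * real N / 16) \<le> (\<Sum>b\<in>totatives (WN N). \<Sum>n<N. fb \<alpha> N b n)"
proof -
  define P where "P = {p. prime p \<and> p < WN N * N \<and> RN \<alpha> N \<le> real p \<and> coprime p (WN N)}"
  define \<theta> where "\<theta> = real (totient (WN N)) / real (WN N)"
  have R: "0 < RN \<alpha> N" "ln (RN \<alpha> N) = \<alpha> * ln (real N)"
    using N by (simp_all add: RN_def ln_powr)
  have "\<alpha> * (real (WN N) * real N / 16) \<le> \<alpha> * (real (card P) * ln (real N))"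
    using primes \<alpha> unfolding P_def by simp
  also have "\<dots> = (\<Sum>p\<in>P. ln (RN \<alpha> N))"
    using R by simp
  also have "\<dots> \<le> (\<Sum>p\<in>P. ln (real p))"
    using R(1) by (intro sum_mono) (auto simp: P_def)
  finally have "\<theta> * (\<alpha> * (real (WN N) * real N / 16)) \<le> \<theta> * (\<Sum>p\<in>P. ln (real p))"
    by (rule mult_left_mono) (simp add: \<theta>_def)
  moreover have "\<theta> * (\<alpha> * (real (WN N) * real N / 16)) = real (totient (WN N)) * (\<alpha> * real N / 16)"
    using W unfolding \<theta>_def by simp
  ultimately show ?thesis
    using sum_fb_totatives[OF W] unfolding P_def \<theta>_def by simp
qed

lemma RN_le_sqrt: "\<alpha> \<le> 1/2 \<Longrightarrow> 1 \<le> N \<Longrightarrow> RN \<alpha> N \<le> sqrt (real N)"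
  unfolding RN_def by (simp add: powr_mono flip: powr_half_sqrt)

lemma eventually_exists_large_average:
  assumes \<alpha>: "0 < \<alpha>" "\<alpha> < 1/2"
  shows "eventually (\<lambda>N. \<exists>b. 1 \<le> b \<and> b < WN N \<and> coprime b (WN N)
            \<and> \<alpha> / 16 \<le> 1 / real N * (\<Sum>n<N. fb \<alpha> N b n)) sequentially"
proof -
  obtain X0 where X0: "\<And>X. X0 \<le> X \<Longrightarrow> real X / 2 \<le> real (prime_count X) * ln (real X)"
    using eventually_prime_count_ln_ge by (auto simp: eventually_sequentially)
  have "eventually (\<lambda>x::real. (2 * sqrt x + 2) * ln x \<le> x / 16) at_top"
    by real_asymp
  from eventually_compose_filterlim[OF this filterlim_real_sequentially]
    eventually_WN_bounds eventually_ge_at_top[of "X0 + 2"]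
  show ?thesis
  proof eventually_elim
    case (elim N)
    define W where "W = WN N"
    have W: "2 \<le> W" "W \<le> N"
      using elim by (auto simp: W_def)
    have R: "0 \<le> RN \<alpha> N" "RN \<alpha> N \<le> sqrt (real N)"
      using \<alpha> elim RN_le_sqrt[of \<alpha> N] by (simp_all add: RN_def)
    have "N \<le> W * N"
      using W by simp
    then have "X0 \<le> W * N - 1"
      using elim by linarith
    then have "real W * real N / 16
      \<le> real (card {p. prime p \<and> p < W * N \<and> RN \<alpha> N \<le> real p \<and> coprime p W}) * ln (real N)"
      using W elim R coprime_WN unfolding W_def
      by (intro card_large_coprime_primes_lower_bound[where w = "wN N"] X0) auto
    then have "real (totient W) * (\<alpha> * real N / 16) \<le> (\<Sum>b\<in>totatives W. \<Sum>n<N. fb \<alpha> N b n)"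
      using W \<alpha> elim unfolding W_def by (intro sum_fb_totatives_lower_bound) auto
    then have "\<alpha> * real N / 16 \<le> (\<Sum>b\<in>totatives W. \<Sum>n<N. fb \<alpha> N b n) / real (totient W)"
      using W by (simp add: pos_le_divide_eq mult.commute)
    moreover obtain b where b: "b \<in> totatives W"
      "(\<Sum>b\<in>totatives W. \<Sum>n<N. fb \<alpha> N b n) / real (totient W) \<le> (\<Sum>n<N. fb \<alpha> N b n)"
      using exists_ge_average[of "totatives W"] W by (auto simp: totient_def)
    ultimately have "\<alpha> * real N / 16 \<le> (\<Sum>n<N. fb \<alpha> N b n)"
      by linarith
    moreover have "1 \<le> b" "b < W" "coprime b W"
      using b(1) W by (auto simp: in_totatives_iff intro: totatives_less)
    ultimately show ?case
      using elim unfolding W_def by (intro exI[of _ b]) (auto simp: field_simps)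
  qed
qed

theorem mainTheorem13:
  fixes chi :: "real \<Rightarrow> real" and \<alpha> :: real
  assumes smooth: "smooth_real chi"
    and nonneg: "\<And>x. chi x \<ge> 0"
    and supp: "\<And>x. \<bar>x\<bar> > 1 \<Longrightarrow> chi x = 0"
    and pos0: "chi 0 > 0"
    and norm: "((\<lambda>x. (deriv chi x)\<^sup>2) has_integral 1) {0..}"
    and alpha: "0 < \<alpha>" "\<alpha> < 1/2"
  shows "\<exists>\<delta>>0. \<exists>c>0. \<exists>C>0. \<exists>N0::nat. \<forall>N::nat. prime N \<and> N \<ge> N0 \<longrightarrow>
     (\<exists>b::nat. 1 \<le> b \<and> b < WN N \<and> coprime b (WN N) \<and>
        (1 / real N) * (\<Sum>n<N. fb \<alpha> N b n) \<ge> \<delta>) \<and>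
     (\<forall>b::nat. 1 \<le> b \<and> b < WN N \<and> coprime b (WN N) \<longrightarrow>
        (\<forall>n<N. 0 \<le> fb \<alpha> N b n \<and> fb \<alpha> N b n \<le> c * nub chi \<alpha> N b n
               \<and> fb \<alpha> N b n \<le> C * ln (real N)))"
proof -
  have vanish: "\<And>x. 1 \<le> x \<Longrightarrow> chi x = 0"
    using vanishes_from_one[OF smooth_real_imp_isCont[OF smooth] supp] .
  have "chi 0 \<noteq> 0"
    using pos0 by simp
  from eventually_conj[OF eventually_exists_large_average[OF alpha]
      eventually_fb_bounds[of chi, OF vanish this alpha(1)]]
  obtain N0 where N0: "\<And>N. N0 \<le> N \<Longrightarrow>
      (\<exists>b. 1 \<le> b \<and> b < WN N \<and> coprime b (WN N) \<and> \<alpha> / 16 \<le> 1 / real N * (\<Sum>n<N. fb \<alpha> N b n))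
      \<and> (\<forall>b<WN N. \<forall>n<N. 0 \<le> fb \<alpha> N b n \<and> fb \<alpha> N b n \<le> 2 / (\<alpha> * (chi 0)\<^sup>2) * nub chi \<alpha> N b n
            \<and> fb \<alpha> N b n \<le> 2 * ln (real N))"
    by (auto simp: eventually_sequentially)
  moreover have "0 < \<alpha> / 16" "0 < 2 / (\<alpha> * (chi 0)\<^sup>2)"
    using alpha pos0 by simp_all
  ultimately show ?thesis
    by (blast intro: zero_less_numeral)
qed

end
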